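(* Let $\mathbb{K}$ be an infinite field of characteristic zero and $\Delta$ a pure $2$-dimensional simplicial complex on vertex set $[n]$. If the facet ideal $\mathcal{F}(\Delta)\subset\mathbb{K}[x_1,\dots,x_n]$ is of linear type, then $A(\Delta)$ has the strong Lefschetz property.
   Context: Let $S=\mathbb{K}[x_1,\dots,x_n]$. For a simplicial complex $\Delta$ on $[n]$, $\mathcal{N}(\Delta)=(x_\tau:\tau\subseteq[n],\ \tau\notin\Delta)$ is the Stanley–Reisner ideal and $\mathcal{F}(\Delta)=(x_F:F\text{ a facet of }\Delta)$ the facet ideal, with $x_\tau=\prod_{j\in\tau}x_j$. $A(\Delta)=S/(\mathcal{N}(\Delta)+(x_1^2,\dots,x_n^2))$. A graded artinian algebra $A$ has the strong Lefschetz property if for a general linear form $L$ all maps $\times L^j:A_i\to A_{i+j}$ have full rank. An ideal $I\subset S$ is of linear type if its Rees algebra $S[It]=\bigoplus_{i\ge0}I^it^i$ is isomorphic to the symmetric algebra of $I$ (equivalently, the defining ideal of $S[It]$ as a quotient of $S[w_1,\dots,w_s]$, $w_k\mapsto g_kt$ for generators $g_k$ of $I$, is generated by polynomials linear in the $w_k$). *)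

theory Defs
  imports "HOL-Library.Poly_Mapping"
begin

text \<open>A polynomial over coefficients 'k in variables indexed by 'v is an element of
  (v =>0 nat) =>0 k (monomial = exponent vector); multiplication is convolution.\<close>

type_synonym ('v, 'k) mpoly = "('v \<Rightarrow>\<^sub>0 nat) \<Rightarrow>\<^sub>0 'k"

definition Var :: "'v \<Rightarrow> ('v, 'k::comm_ring_1) mpoly" where
  "Var v = Poly_Mapping.single (Poly_Mapping.single v 1) 1"

definition Const :: "'k \<Rightarrow> ('v, 'k::comm_ring_1) mpoly" where
  "Const a = Poly_Mapping.single 0 a"

definition sqfree_mon :: "'v set \<Rightarrow> ('v, 'k::comm_ring_1) mpoly" where
  "sqfree_mon \<tau> = (\<Prod>j\<in>\<tau>. Var j)"

definition mdeg :: "('v \<Rightarrow>\<^sub>0 nat) \<Rightarrow> nat" where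
  "mdeg m = (\<Sum>v\<in>Poly_Mapping.keys m. Poly_Mapping.lookup m v)"

definition poly_in :: "'v set \<Rightarrow> ('v, 'k::zero) mpoly \<Rightarrow> bool" where
  "poly_in V p \<longleftrightarrow> (\<forall>m\<in>Poly_Mapping.keys p. Poly_Mapping.keys m \<subseteq> V)"

text \<open>p is homogeneous of degree d (the zero polynomial is homogeneous of every degree)\<close>
definition homog :: "nat \<Rightarrow> ('v, 'k::zero) mpoly \<Rightarrow> bool" where
  "homog d p \<longleftrightarrow> (\<forall>m\<in>Poly_Mapping.keys p. mdeg m = d)"

definition peval :: "('k::zero \<Rightarrow> 'r::comm_semiring_1) \<Rightarrow> ('v \<Rightarrow> 'r) \<Rightarrow> ('v, 'k) mpoly \<Rightarrow> 'r" where
  "peval c h p = (\<Sum>m\<in>Poly_Mapping.keys p. c (Poly_Mapping.lookup p m) * (\<Prod>v\<in>Poly_Mapping.keys m. h v ^ Poly_Mapping.lookup m v))"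

definition ideal_gen_in :: "'a::comm_ring_1 set \<Rightarrow> 'a set \<Rightarrow> 'a set" where
  "ideal_gen_in R G = {x. \<exists>F r. finite F \<and> F \<subseteq> G \<and> (\<forall>g\<in>F. r g \<in> R) \<and> x = (\<Sum>g\<in>F. r g * g)}"

definition simplicial_complex :: "nat \<Rightarrow> nat set set \<Rightarrow> bool" where
  "simplicial_complex n \<Delta> \<longleftrightarrow>
     \<Delta> \<subseteq> Pow {1..n} \<and> {} \<in> \<Delta> \<and> (\<forall>\<sigma>\<in>\<Delta>. \<forall>\<tau>. \<tau> \<subseteq> \<sigma> \<longrightarrow> \<tau> \<in> \<Delta>)
     \<and> (\<forall>i\<in>{1..n}. {i} \<in> \<Delta>)"

definition facets :: "nat set set \<Rightarrow> nat set set" where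
  "facets \<Delta> = {F\<in>\<Delta>. \<forall>G\<in>\<Delta>. F \<subseteq> G \<longrightarrow> G = F}"

definition pure_of_dim :: "nat \<Rightarrow> nat set set \<Rightarrow> bool" where
  "pure_of_dim d \<Delta> \<longleftrightarrow> (\<forall>F\<in>facets \<Delta>. card F = d + 1)"

text \<open>S = K[x_1..x_n], as polynomials in nat-indexed variables involving only x_1..x_n.\<close>
definition Sring :: "nat \<Rightarrow> (nat, 'k::comm_ring_1) mpoly set" where
  "Sring n = {p. poly_in {1..n} p}"

text \<open>Stanley--Reisner ideal N(Delta) + (x_1^2,...,x_n^2) in S; A(Delta) = S / this ideal.\<close>
definition AD_ideal :: "nat \<Rightarrow> nat set set \<Rightarrow> (nat, 'k::comm_ring_1) mpoly set" where
  "AD_ideal n \<Delta> = ideal_gen_in (Sring n)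
      ({sqfree_mon \<tau> | \<tau>. \<tau> \<subseteq> {1..n} \<and> \<tau> \<notin> \<Delta>} \<union> {Var i ^ 2 | i. i \<in> {1..n}})"

text \<open>Multiplication by L^j from A_i to A_(i+j), A = S/I, has full rank, i.e. (finite dimensional
  spaces) it is injective or surjective.\<close>
definition mult_full_rank :: "nat \<Rightarrow> (nat, 'k::comm_ring_1) mpoly set \<Rightarrow> (nat, 'k) mpoly \<Rightarrow> nat \<Rightarrow> nat \<Rightarrow> bool" where
  "mult_full_rank n I L i j \<longleftrightarrow>
     (\<forall>f. f \<in> Sring n \<and> homog i f \<and> L ^ j * f \<in> I \<longrightarrow> f \<in> I)
   \<or> (\<forall>g. g \<in> Sring n \<and> homog (i + j) g \<longrightarrow>
          (\<exists>f. f \<in> Sring n \<and> homog i f \<and> g - L ^ j * f \<in> I))"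

definition lin_form :: "nat \<Rightarrow> (nat \<Rightarrow> 'k) \<Rightarrow> (nat, 'k::comm_ring_1) mpoly" where
  "lin_form n c = (\<Sum>i=1..n. Const (c i) * Var i)"

text \<open>Strong Lefschetz property of S/I: for a general linear form L (i.e. all coefficient vectors
  c in a nonempty Zariski open subset of K^n, the complement of the zero set of a nonzero polynomial
  P), all maps x L^j : A_i -> A_(i+j) have full rank.\<close>
definition strong_lefschetz :: "nat \<Rightarrow> (nat, 'k::field) mpoly set \<Rightarrow> bool" where
  "strong_lefschetz n I \<longleftrightarrow>
     (\<exists>P::(nat, 'k) mpoly. P \<in> Sring n \<and> P \<noteq> 0 \<and>
        (\<forall>c. peval (\<lambda>a. a) c P \<noteq> 0 \<longrightarrow> (\<forall>i j. mult_full_rank n I (lin_form n c) i j)))"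

text \<open>Generators of F(Delta): g_F = x_F for the facets F.  Rees presentation
  S[w_F : F facet] -> S[t], x_i |-> x_i, w_F |-> x_F t.  Variables of S[w]: Inl i = x_i,
  Inr F = w_F.  Variables of S[t]: Some i = x_i, None = t.\<close>

definition Sw_ring :: "nat \<Rightarrow> nat set set \<Rightarrow> (nat + nat set, 'k::comm_ring_1) mpoly set" where
  "Sw_ring n \<Delta> = {p. poly_in (Inl ` {1..n} \<union> Inr ` facets \<Delta>) p}"

definition rees_map :: "nat set set \<Rightarrow> (nat + nat set, 'k::comm_ring_1) mpoly \<Rightarrow> (nat option, 'k) mpoly" where
  "rees_map \<Delta> p = peval Const
      (\<lambda>v. case v of Inl i \<Rightarrow> Var (Some i) | Inr F \<Rightarrow> sqfree_mon (Some ` F) * Var None) p"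

definition rees_ideal :: "nat \<Rightarrow> nat set set \<Rightarrow> (nat + nat set, 'k::comm_ring_1) mpoly set" where
  "rees_ideal n \<Delta> = {p \<in> Sw_ring n \<Delta>. rees_map \<Delta> p = 0}"

definition wdeg :: "(nat + nat set \<Rightarrow>\<^sub>0 nat) \<Rightarrow> nat" where
  "wdeg m = (\<Sum>v\<in>Poly_Mapping.keys m. (case v of Inl _ \<Rightarrow> 0 | Inr _ \<Rightarrow> Poly_Mapping.lookup m v))"

definition linear_in_w :: "(nat + nat set, 'k::zero) mpoly \<Rightarrow> bool" where
  "linear_in_w p \<longleftrightarrow> (\<forall>m\<in>Poly_Mapping.keys p. wdeg m = 1)"

definition facet_ideal_linear_type :: "'k::comm_ring_1 itself \<Rightarrow> nat \<Rightarrow> nat set set \<Rightarrow> bool" where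
  "facet_ideal_linear_type _ n \<Delta> \<longleftrightarrow>
     (rees_ideal n \<Delta> :: (nat + nat set, 'k) mpoly set)
       = ideal_gen_in (Sw_ring n \<Delta>) {p \<in> rees_ideal n \<Delta>. linear_in_w p}"

end

theory Submission
  imports Defs "HOL.Rat"
begin

text \<open>
  Modulo \<open>\<N>(\<Delta>) + (x\<^sub>1\<^sup>2, \<dots>, x\<^sub>n\<^sup>2)\<close> the squarefree monomials \<open>x\<^sub>\<sigma>\<close>, \<open>\<sigma> \<in> \<Delta>\<close>, form a basis,
  so \<open>A(\<Delta>)\<close> lives in degrees \<open>0, \<dots>, 3\<close>. For \<open>L = \<Sum> c\<^sub>i x\<^sub>i\<close> with all \<open>c\<^sub>i \<noteq> 0\<close>, rescaling
  \<open>x\<^sub>\<sigma>\<close> by \<open>\<Prod>\<^sub>v\<^sub>\<in>\<^sub>\<sigma> c\<^sub>v\<close> turns multiplication by \<open>L\<^sup>j\<close> into \<open>j!\<close> times the map sending a face to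
  the sum of the faces containing it with \<open>j\<close> more vertices. Hence \<open>A\<^sub>0 \<rightarrow> A\<^sub>j\<close> is injective,
  maps into \<open>A\<^sub>k\<close>, \<open>k \<ge> 4\<close>, are trivially onto, and \<open>A\<^sub>1 \<rightarrow> A\<^sub>2\<close> is injective because every
  vertex lies in a triangle, an odd cycle of edges. The maps \<open>A\<^sub>1 \<rightarrow> A\<^sub>3\<close> and \<open>A\<^sub>2 \<rightarrow> A\<^sub>3\<close> are
  onto as soon as the incidence vectors of the facets are linearly independent. A rational
  dependency would give integer weights \<open>a\<^sub>F\<close>, balanced at every vertex, and then
  \<open>\<Prod> w\<^sub>F\<^bsup>a\<^sub>F\<^sup>+\<^esup> - \<Prod> w\<^sub>F\<^bsup>a\<^sub>F\<^sup>-\<^esup>\<close> is a relation of the Rees algebra of \<open>\<F>(\<Delta>)\<close> involving no \<open>x\<^sub>i\<close>,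
  whereas every relation linear in the \<open>w\<^sub>F\<close> has an \<open>x\<^sub>i\<close> in each term.
\<close>

abbreviation lookup :: "('a \<Rightarrow>\<^sub>0 'b::zero) \<Rightarrow> 'a \<Rightarrow> 'b" where
  "lookup \<equiv> Poly_Mapping.lookup"

abbreviation keys :: "('a \<Rightarrow>\<^sub>0 'b::zero) \<Rightarrow> 'a set" where
  "keys \<equiv> Poly_Mapping.keys"

abbreviation single :: "'a \<Rightarrow> 'b::zero \<Rightarrow> 'a \<Rightarrow>\<^sub>0 'b" where
  "single \<equiv> Poly_Mapping.single"

section \<open>Polynomials\<close>

lemma keys_add_nat: "keys (a + b) = keys a \<union> keys (b :: 'v \<Rightarrow>\<^sub>0 nat)"
  by (auto simp: in_keys_iff lookup_add)

lemma keys_diff_nat: "keys (m - e) \<subseteq> keys (m :: 'v \<Rightarrow>\<^sub>0 nat)"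
  by (auto simp: in_keys_iff lookup_minus)

lemma poly_mapping_sum_single: "p = (\<Sum>m\<in>keys p. single m (lookup p m))"
proof (rule poly_mapping_eqI)
  fix x
  have "lookup (\<Sum>m\<in>keys p. single m (lookup p m)) x = (\<Sum>m\<in>keys p. if m = x then lookup p m else 0)"
    by (simp add: lookup_sum lookup_single when_def)
  also have "\<dots> = lookup p x"
    by (cases "x \<in> keys p") (auto simp: in_keys_iff)
  finally show "lookup p x = lookup (\<Sum>m\<in>keys p. single m (lookup p m)) x" by simp
qed

lemma lookup_single_mult_eq:
  fixes p :: "('v, 'k::comm_ring_1) mpoly"
  shows "lookup (single k a * p) m = a * (\<Sum>q. lookup p q when m = k + q)"
proof -
  have "lookup (single k a * p) m = (\<Sum>l. lookup (single k a) l * (\<Sum>q. lookup p q when m = l + q))"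
    by (rule lookup_mult)
  also have "\<dots> = (\<Sum>l. (a * (\<Sum>q. lookup p q when m = l + q)) when l = k)"
    by (rule Sum_any.cong) (auto simp: lookup_single when_def)
  finally show ?thesis by simp
qed

lemma lookup_single_mult_add:
  fixes p :: "('v, 'k::comm_ring_1) mpoly"
  shows "lookup (single k a * p) (k + q) = a * lookup p q"
proof -
  have "(\<Sum>q'. lookup p q' when k + q = k + q') = (\<Sum>q'. lookup p q' when q' = q)"
    by (rule Sum_any.cong) (auto simp: when_def)
  then show ?thesis by (simp add: lookup_single_mult_eq)
qed

lemma lookup_single_mult_not_add:
  fixes p :: "('v, 'k::comm_ring_1) mpoly"
  shows "(\<And>q. m \<noteq> k + q) \<Longrightarrow> lookup (single k a * p) m = 0"
  by (simp add: lookup_single_mult_eq)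

definition sqfree_exp :: "'v set \<Rightarrow> 'v \<Rightarrow>\<^sub>0 nat" where
  "sqfree_exp \<sigma> = (\<Sum>j\<in>\<sigma>. single j 1)"

lemma lookup_sqfree_exp: "finite \<sigma> \<Longrightarrow> lookup (sqfree_exp \<sigma>) j = (if j \<in> \<sigma> then 1 else 0)"
  by (simp add: sqfree_exp_def lookup_sum lookup_single when_def)

lemma keys_sqfree_exp: "finite \<sigma> \<Longrightarrow> keys (sqfree_exp \<sigma>) = \<sigma>"
  by (auto simp: in_keys_iff lookup_sqfree_exp split: if_splits)

lemma sqfree_mon_eq_single: "(sqfree_mon \<sigma> :: ('v, 'k::comm_ring_1) mpoly) = single (sqfree_exp \<sigma>) 1"
proof (induction \<sigma> rule: infinite_finite_induct)
  case (insert x F)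
  then show ?case by (simp add: sqfree_mon_def sqfree_exp_def Var_def mult_single)
qed (simp_all add: sqfree_mon_def sqfree_exp_def one_poly_mapping.abs_eq single.abs_eq)

lemma Var_power_2: "(Var i ^ 2 :: ('v, 'k::comm_ring_1) mpoly) = single (single i 2) 1"
  by (simp add: Var_def power2_eq_square mult_single single_add[symmetric] numeral_2_eq_2)

definition face_coeff :: "('v, 'k::comm_ring_1) mpoly \<Rightarrow> 'v set \<Rightarrow> 'k" where
  "face_coeff p \<sigma> = lookup p (sqfree_exp \<sigma>)"

lemma face_coeff_diff: "face_coeff (p - q) \<sigma> = face_coeff p \<sigma> - face_coeff q \<sigma>"
  by (simp add: face_coeff_def lookup_minus)

lemma mdeg_add: "mdeg (a + b) = mdeg a + mdeg (b :: 'v \<Rightarrow>\<^sub>0 nat)"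
proof -
  have "mdeg m = (\<Sum>v\<in>keys a \<union> keys b. lookup m v)" if "keys m \<subseteq> keys a \<union> keys b" for m :: "'v \<Rightarrow>\<^sub>0 nat"
    unfolding mdeg_def using that by (intro sum.mono_neutral_left) (auto simp: in_keys_iff)
  then show ?thesis
    by (simp add: keys_add_nat lookup_add sum.distrib)
qed

lemma mdeg_sqfree_exp: "finite \<sigma> \<Longrightarrow> mdeg (sqfree_exp \<sigma>) = card \<sigma>"
  by (simp add: mdeg_def keys_sqfree_exp lookup_sqfree_exp)

lemma homog_mult:
  fixes p q :: "('v, 'k::comm_ring_1) mpoly"
  assumes "homog i p" "homog j q"
  shows "homog (i + j) (p * q)"
  unfolding homog_def
proof
  fix m assume "m \<in> keys (p * q)"
  then obtain a b where "m = a + b" "a \<in> keys p" "b \<in> keys q"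
    using keys_mult[of p q] by blast
  then show "mdeg m = i + j" using assms unfolding homog_def by (simp add: mdeg_add)
qed

lemma homog_power: "homog d p \<Longrightarrow> homog (k * d) (p ^ k :: ('v, 'k::comm_ring_1) mpoly)"
proof (induction k)
  case 0
  show ?case by (simp add: homog_def mdeg_def)
next
  case (Suc k)
  then show ?case using homog_mult[of d p "k * d" "p ^ k"] by simp
qed

lemma homog_diff: "homog d p \<Longrightarrow> homog d q \<Longrightarrow> homog d (p - q :: ('v, 'k::ab_group_add) mpoly)"
  unfolding homog_def by (auto simp: in_keys_iff lookup_minus)

lemma homog_face_coeff: "homog d p \<Longrightarrow> finite \<sigma> \<Longrightarrow> face_coeff p \<sigma> \<noteq> 0 \<Longrightarrow> card \<sigma> = d"
  unfolding homog_def face_coeff_def by (metis in_keys_iff mdeg_sqfree_exp)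

lemma homog_lin_form: "homog 1 (lin_form n c :: (nat, 'k::comm_ring_1) mpoly)"
  unfolding homog_def
proof
  fix m assume "m \<in> keys (lin_form n c :: (nat, 'k) mpoly)"
  then have "m \<in> (\<Union>i\<in>{1..n}. keys (Const (c i) * Var i :: (nat, 'k) mpoly))"
    unfolding lin_form_def by (rule subsetD[OF keys_sum])
  then obtain i where "m \<in> keys (Const (c i) * Var i :: (nat, 'k) mpoly)" by (elim UN_E)
  then show "mdeg m = 1" by (simp add: Const_def Var_def mult_single mdeg_def split: if_splits)
qed

lemma homog_lin_form_power_mult: "homog i f \<Longrightarrow> homog (i + j) (lin_form n c ^ j * f)"
  using homog_mult[OF homog_power[OF homog_lin_form[of n c], of j]] by (simp add: add.commute)

lemma poly_in_0 [simp]: "poly_in V 0"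
  by (simp add: poly_in_def)

lemma poly_in_add: "poly_in V p \<Longrightarrow> poly_in V q \<Longrightarrow> poly_in V (p + q)"
  unfolding poly_in_def by (metis Un_iff keys_add subsetD)

lemma poly_in_diff: "poly_in V p \<Longrightarrow> poly_in V q \<Longrightarrow> poly_in V (p - q :: ('v, 'k::ab_group_add) mpoly)"
  using poly_in_add[of V p "- q"] by (simp add: poly_in_def)

lemma poly_in_mult: "poly_in V p \<Longrightarrow> poly_in V q \<Longrightarrow> poly_in V (p * q :: ('v, 'k::comm_ring_1) mpoly)"
  unfolding poly_in_def
proof
  fix m assume h: "\<forall>m\<in>keys p. keys m \<subseteq> V" "\<forall>m\<in>keys q. keys m \<subseteq> V" and "m \<in> keys (p * q)"
  then obtain a b where "m = a + b" "a \<in> keys p" "b \<in> keys q"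
    using keys_mult[of p q] by blast
  then show "keys m \<subseteq> V" using h by (simp add: keys_add_nat)
qed

lemma poly_in_single: "keys m \<subseteq> V \<Longrightarrow> poly_in V (single m a)"
  by (simp add: poly_in_def)

lemma poly_in_sum: "(\<And>x. x \<in> A \<Longrightarrow> poly_in V (f x)) \<Longrightarrow> poly_in V (sum f A)"
  by (induction A rule: infinite_finite_induct) (simp_all add: poly_in_add)

lemma poly_in_power: "poly_in V p \<Longrightarrow> poly_in V (p ^ k :: ('v, 'k::comm_ring_1) mpoly)"
  by (induction k) (simp add: poly_in_def, simp add: poly_in_mult)

lemma lin_form_in_Sring: "lin_form n c \<in> Sring n"
  unfolding lin_form_def Sring_def Const_def Var_def
  by (intro CollectI poly_in_sum) (simp add: mult_single poly_in_single)

lemma lin_form_power_mult_in_Sring: "f \<in> Sring n \<Longrightarrow> lin_form n c ^ j * f \<in> Sring n"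
  using lin_form_in_Sring[of n c] unfolding Sring_def by (simp add: poly_in_mult poly_in_power)

lemma sqfree_mon_in_Sring:
  assumes "\<sigma> \<subseteq> {1..n}"
  shows "sqfree_mon \<sigma> \<in> Sring n"
proof -
  have "finite \<sigma>" using assms finite_subset by blast
  then show ?thesis using assms by (simp add: Sring_def sqfree_mon_eq_single keys_sqfree_exp poly_in_single)
qed

lemma sqfree_mon_neq_0: "(sqfree_mon \<sigma> :: ('v, 'k::comm_ring_1) mpoly) \<noteq> 0"
  by (metis sqfree_mon_eq_single lookup_single_eq lookup_zero zero_neq_one)

lemma peval_sqfree_mon: "finite \<sigma> \<Longrightarrow> peval (\<lambda>a. a) c (sqfree_mon \<sigma>) = prod c \<sigma>"
  by (simp add: sqfree_mon_eq_single peval_def keys_sqfree_exp lookup_sqfree_exp)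

lemma ideal_gen_in_0: "0 \<in> ideal_gen_in R G"
  unfolding ideal_gen_in_def by (rule CollectI, rule exI[of _ "{}"]) auto

lemma ideal_gen_in_generator: "r \<in> R \<Longrightarrow> g \<in> G \<Longrightarrow> r * g \<in> ideal_gen_in R G"
  unfolding ideal_gen_in_def by (rule CollectI, rule exI[of _ "{g}"], rule exI[of _ "\<lambda>_. r"]) auto

lemma ideal_gen_in_add:
  assumes R0: "0 \<in> R" and R_add: "\<And>a b. a \<in> R \<Longrightarrow> b \<in> R \<Longrightarrow> a + b \<in> R"
    and x: "x \<in> ideal_gen_in R G" and y: "y \<in> ideal_gen_in R G"
  shows "x + y \<in> ideal_gen_in R G"
proof -
  obtain F1 r1 where F1: "finite F1" "F1 \<subseteq> G" "\<forall>g\<in>F1. r1 g \<in> R" "x = (\<Sum>g\<in>F1. r1 g * g)"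
    using x unfolding ideal_gen_in_def by blast
  obtain F2 r2 where F2: "finite F2" "F2 \<subseteq> G" "\<forall>g\<in>F2. r2 g \<in> R" "y = (\<Sum>g\<in>F2. r2 g * g)"
    using y unfolding ideal_gen_in_def by blast
  have extend: "(\<Sum>g\<in>F. r g * g) = (\<Sum>g\<in>F1 \<union> F2. (if g \<in> F then r g else 0) * g)"
    if "F \<subseteq> F1 \<union> F2" for F r
  proof -
    have "(\<Sum>g\<in>F1 \<union> F2. (if g \<in> F then r g else 0) * g) = (\<Sum>g\<in>F1 \<union> F2. if g \<in> F then r g * g else 0)"
      by (rule sum.cong) auto
    also have "\<dots> = (\<Sum>g\<in>F. r g * g)"
      using that F1(1) F2(1) by (simp add: sum.If_cases Int_absorb1)
    finally show ?thesis by simp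
  qed
  define r where "r g = (if g \<in> F1 then r1 g else 0) + (if g \<in> F2 then r2 g else 0)" for g
  have "x + y = (\<Sum>g\<in>F1 \<union> F2. r g * g)"
    using extend[of F1 r1] extend[of F2 r2] F1(4) F2(4)
    by (simp add: r_def distrib_right sum.distrib)
  moreover have "\<forall>g\<in>F1 \<union> F2. r g \<in> R"
    using F1(3) F2(3) R0 R_add by (auto simp: r_def)
  ultimately show ?thesis
    unfolding ideal_gen_in_def using F1(1,2) F2(1,2)
    by (intro CollectI exI[of _ "F1 \<union> F2"] exI[of _ r]) simp
qed

lemma ideal_gen_in_sum:
  assumes "0 \<in> R" and "\<And>a b. a \<in> R \<Longrightarrow> b \<in> R \<Longrightarrow> a + b \<in> R"
  shows "(\<And>x. x \<in> A \<Longrightarrow> f x \<in> ideal_gen_in R G) \<Longrightarrow> sum f A \<in> ideal_gen_in R G"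
  by (induction A rule: infinite_finite_induct) (simp_all add: ideal_gen_in_0 ideal_gen_in_add[OF assms])

lemma ideal_gen_in_keys:
  assumes "x \<in> ideal_gen_in R G" and "m \<in> keys x"
  obtains g r m' where "g \<in> G" "m' \<in> keys g" "m = r + m'"
proof -
  obtain F c where F: "finite F" "F \<subseteq> G" "x = (\<Sum>g\<in>F. c g * g)"
    using assms(1) unfolding ideal_gen_in_def by blast
  then obtain g where "g \<in> F" "m \<in> keys (c g * g)"
    using assms(2) keys_sum[of "\<lambda>g. c g * g" F] by blast
  with F(2) show ?thesis
    using keys_mult[of "c g" g] that by blast
qed

section \<open>Simplicial complexes\<close>

locale simplicial =
  fixes n :: nat and \<Delta> :: "nat set set"
  assumes complex: "simplicial_complex n \<Delta>"
begin

lemma face_subset: "\<sigma> \<in> \<Delta> \<Longrightarrow> \<sigma> \<subseteq> {1..n}"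
  using complex unfolding simplicial_complex_def by blast

lemma finite_face: "\<sigma> \<in> \<Delta> \<Longrightarrow> finite \<sigma>"
  using face_subset finite_subset by blast

lemma finite_complex: "finite \<Delta>"
  using complex unfolding simplicial_complex_def by (meson finite_Pow_iff finite_atLeastAtMost finite_subset)

lemma finite_facets: "finite (facets \<Delta>)"
  using finite_complex by (simp add: facets_def)

lemma subface: "\<sigma> \<in> \<Delta> \<Longrightarrow> \<tau> \<subseteq> \<sigma> \<Longrightarrow> \<tau> \<in> \<Delta>"
  using complex unfolding simplicial_complex_def by blast

lemma facet_face: "F \<in> facets \<Delta> \<Longrightarrow> F \<in> \<Delta>"
  by (simp add: facets_def)

lemma face_subset_facet:
  assumes "\<sigma> \<in> \<Delta>"
  obtains F where "F \<in> facets \<Delta>" "\<sigma> \<subseteq> F"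
proof -
  have "{G \<in> \<Delta>. \<sigma> \<subseteq> G} \<noteq> {}" using assms by blast
  then obtain F where "F \<in> {G \<in> \<Delta>. \<sigma> \<subseteq> G}" "\<forall>G \<in> {G \<in> \<Delta>. \<sigma> \<subseteq> G}. F \<subseteq> G \<longrightarrow> F = G"
    using finite_has_maximal[of "{G \<in> \<Delta>. \<sigma> \<subseteq> G}"] finite_complex by auto
  then have "F \<in> facets \<Delta>" "\<sigma> \<subseteq> F"
    unfolding facets_def by auto
  then show thesis by (rule that)
qed

end

locale pure_2_complex = simplicial +
  assumes pure: "pure_of_dim 2 \<Delta>"
begin

lemma card_facet: "F \<in> facets \<Delta> \<Longrightarrow> card F = 3"
  using pure by (simp add: pure_of_dim_def)

lemma card_face_le_3: "\<sigma> \<in> \<Delta> \<Longrightarrow> card \<sigma> \<le> 3"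
  by (metis card_facet card_mono face_subset_facet facet_face finite_face)

lemma exists_face_card:
  assumes "k \<le> 3"
  obtains \<tau> where "\<tau> \<in> \<Delta>" "card \<tau> = k"
proof -
  have "{} \<in> \<Delta>" using complex by (simp add: simplicial_complex_def)
  then obtain F where "F \<in> facets \<Delta>" by (rule face_subset_facet)
  moreover obtain \<tau> where "\<tau> \<subseteq> F" "card \<tau> = k"
    using obtain_subset_with_card_n[of k F] assms card_facet[OF \<open>F \<in> facets \<Delta>\<close>] by auto
  ultimately show thesis using that subface facet_face by blast
qed

end

section \<open>The monomial ideal \<open>\<N>(\<Delta>) + (x\<^sub>1\<^sup>2, \<dots>, x\<^sub>n\<^sup>2)\<close>\<close>

definition AD_monomial :: "nat set set \<Rightarrow> (nat \<Rightarrow>\<^sub>0 nat) \<Rightarrow> bool" where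
  "AD_monomial \<Delta> m \<longleftrightarrow> (\<exists>i. 2 \<le> lookup m i) \<or> keys m \<notin> \<Delta>"

lemma not_AD_monomial_eq_sqfree_exp:
  assumes "\<not> AD_monomial \<Delta> m"
  shows "m = sqfree_exp (keys m)"
proof (rule poly_mapping_eqI)
  fix x
  have "lookup m x < 2" using assms by (auto simp: AD_monomial_def not_le)
  then show "lookup m x = lookup (sqfree_exp (keys m)) x"
    by (cases "lookup m x = 0") (auto simp: lookup_sqfree_exp in_keys_iff)
qed

lemma not_AD_monomial_sqfree_exp: "\<sigma> \<in> \<Delta> \<Longrightarrow> finite \<sigma> \<Longrightarrow> \<not> AD_monomial \<Delta> (sqfree_exp \<sigma>)"
  by (simp add: AD_monomial_def lookup_sqfree_exp keys_sqfree_exp)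

lemma single_AD_monomial_mem_AD_ideal:
  assumes m: "keys m \<subseteq> {1..n}" and AD: "AD_monomial \<Delta> m"
  shows "single m a \<in> (AD_ideal n \<Delta> :: (nat, 'k::comm_ring_1) mpoly set)"
proof -
  let ?G = "{sqfree_mon \<tau> | \<tau>. \<tau> \<subseteq> {1..n} \<and> \<tau> \<notin> \<Delta>} \<union> {Var i ^ 2 | i. i \<in> {1..n}}
    :: (nat, 'k) mpoly set"
  have split: "single m a = single (m - e) a * single e 1" if "\<And>x. lookup e x \<le> lookup m x" for e
  proof -
    have "m = (m - e) + e"
      by (rule poly_mapping_eqI) (simp add: lookup_add lookup_minus that)
    then show ?thesis by (metis mult_single mult.right_neutral)
  qed
  have cofactor: "single (m - e) a \<in> Sring n" for e
    unfolding Sring_def using m keys_diff_nat[of m e] by (auto intro: poly_in_single)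
  from AD consider (square) i where "2 \<le> lookup m i" | (nonface) "keys m \<notin> \<Delta>"
    unfolding AD_monomial_def by blast
  then show ?thesis
  proof cases
    case square
    have "lookup (single i 2) x \<le> lookup m x" for x
      using square by (auto simp: lookup_single when_def)
    then have "single m a = single (m - single i 2) a * Var i ^ 2"
      unfolding Var_power_2 by (rule split)
    moreover have "i \<in> keys m" using square by (simp add: in_keys_iff)
    then have "Var i ^ 2 \<in> ?G" using m by blast
    ultimately show ?thesis
      unfolding AD_ideal_def using ideal_gen_in_generator[OF cofactor] by simp
  next
    case nonface
    have "lookup (sqfree_exp (keys m)) x \<le> lookup m x" for x
      by (auto simp: lookup_sqfree_exp in_keys_iff)
    then have "single m a = single (m - sqfree_exp (keys m)) a * sqfree_mon (keys m)"
      unfolding sqfree_mon_eq_single by (rule split)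
    moreover have "sqfree_mon (keys m) \<in> ?G" using nonface m by blast
    ultimately show ?thesis
      unfolding AD_ideal_def using ideal_gen_in_generator[OF cofactor] by simp
  qed
qed

lemma mem_AD_ideal_if_AD_monomials:
  assumes p: "p \<in> Sring n" and AD: "\<And>m. m \<in> keys p \<Longrightarrow> AD_monomial \<Delta> m"
  shows "p \<in> (AD_ideal n \<Delta> :: (nat, 'k::comm_ring_1) mpoly set)"
proof -
  have "(\<Sum>m\<in>keys p. single m (lookup p m)) \<in> (AD_ideal n \<Delta> :: (nat, 'k) mpoly set)"
    unfolding AD_ideal_def
  proof (rule ideal_gen_in_sum)
    fix m assume "m \<in> keys p"
    moreover have "keys m \<subseteq> {1..n}" using \<open>m \<in> keys p\<close> p unfolding Sring_def poly_in_def by blast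
    ultimately show "single m (lookup p m) \<in> ideal_gen_in (Sring n)
        ({sqfree_mon \<tau> | \<tau>. \<tau> \<subseteq> {1..n} \<and> \<tau> \<notin> \<Delta>} \<union> {Var i ^ 2 | i. i \<in> {1..n}})"
      using single_AD_monomial_mem_AD_ideal AD unfolding AD_ideal_def by blast
  qed (auto simp: Sring_def poly_in_add)
  then show ?thesis using poly_mapping_sum_single[of p] by simp
qed

context simplicial
begin

lemma AD_monomial_if_mem_AD_ideal:
  assumes p: "p \<in> (AD_ideal n \<Delta> :: (nat, 'k::comm_ring_1) mpoly set)" and m: "m \<in> keys p"
  shows "AD_monomial \<Delta> m"
proof -
  obtain g r m' where g: "g \<in> {sqfree_mon \<tau> | \<tau>. \<tau> \<subseteq> {1..n} \<and> \<tau> \<notin> \<Delta>} \<union> {Var i ^ 2 | i. i \<in> {1..n}}"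
    and m': "m' \<in> keys (g :: (nat, 'k) mpoly)" "m = r + m'"
    using ideal_gen_in_keys[OF p[unfolded AD_ideal_def] m] .
  from g show ?thesis
  proof
    assume "g \<in> {sqfree_mon \<tau> | \<tau>. \<tau> \<subseteq> {1..n} \<and> \<tau> \<notin> \<Delta>}"
    then obtain \<tau> where \<tau>: "g = sqfree_mon \<tau>" "\<tau> \<subseteq> {1..n}" "\<tau> \<notin> \<Delta>" by blast
    then have "finite \<tau>" using finite_subset by blast
    then have "\<tau> \<subseteq> keys m" using \<tau>(1) m' by (simp add: sqfree_mon_eq_single keys_add_nat keys_sqfree_exp)
    then show ?thesis using subface \<tau>(3) unfolding AD_monomial_def by blast
  next
    assume "g \<in> {Var i ^ 2 | i. i \<in> {1..n}}"
    then obtain i where "g = Var i ^ 2" by blast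
    then have "2 \<le> lookup m i" using m' by (simp add: Var_power_2 lookup_add)
    then show ?thesis unfolding AD_monomial_def by blast
  qed
qed

lemma mem_AD_ideal_iff_face_coeff:
  assumes p: "p \<in> Sring n"
  shows "p \<in> (AD_ideal n \<Delta> :: (nat, 'k::comm_ring_1) mpoly set) \<longleftrightarrow> (\<forall>\<sigma>\<in>\<Delta>. face_coeff p \<sigma> = 0)"
proof
  assume "p \<in> AD_ideal n \<Delta>"
  then have "sqfree_exp \<sigma> \<notin> keys p" if "\<sigma> \<in> \<Delta>" for \<sigma>
    using AD_monomial_if_mem_AD_ideal not_AD_monomial_sqfree_exp[OF that finite_face[OF that]] by blast
  then show "\<forall>\<sigma>\<in>\<Delta>. face_coeff p \<sigma> = 0"
    by (simp add: face_coeff_def in_keys_iff)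
next
  assume coeffs: "\<forall>\<sigma>\<in>\<Delta>. face_coeff p \<sigma> = 0"
  have "AD_monomial \<Delta> m" if "m \<in> keys p" for m
  proof (rule ccontr)
    assume "\<not> AD_monomial \<Delta> m"
    then have "keys m \<in> \<Delta>" "m = sqfree_exp (keys m)"
      using not_AD_monomial_eq_sqfree_exp by (auto simp: AD_monomial_def)
    then show False using coeffs that by (metis face_coeff_def in_keys_iff)
  qed
  then show "p \<in> AD_ideal n \<Delta>" by (rule mem_AD_ideal_if_AD_monomials[OF p])
qed

lemma homog_mem_AD_ideal_iff:
  assumes "f \<in> Sring n" "homog d f"
  shows "f \<in> (AD_ideal n \<Delta> :: (nat, 'k::comm_ring_1) mpoly set) \<longleftrightarrow> (\<forall>\<sigma>\<in>\<Delta>. card \<sigma> = d \<longrightarrow> face_coeff f \<sigma> = 0)"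
  using mem_AD_ideal_iff_face_coeff[OF assms(1)] homog_face_coeff[OF assms(2)] finite_face by blast

end

section \<open>Multiplication by powers of a linear form\<close>

lemma face_coeff_lin_form_mult:
  assumes "finite \<tau>" "\<tau> \<subseteq> {1..n}"
  shows "face_coeff (lin_form n c * p) \<tau> = (\<Sum>v\<in>\<tau>. c v * face_coeff p (\<tau> - {v}))"
proof -
  have "face_coeff (lin_form n c * p) \<tau> = (\<Sum>i=1..n. lookup (single (single i 1) (c i) * p) (sqfree_exp \<tau>))"
    by (simp add: face_coeff_def lin_form_def sum_distrib_right lookup_sum Const_def Var_def mult_single)
  also have "\<dots> = (\<Sum>i=1..n. if i \<in> \<tau> then c i * face_coeff p (\<tau> - {i}) else 0)"
  proof (rule sum.cong[OF refl])
    fix i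
    show "lookup (single (single i 1) (c i) * p) (sqfree_exp \<tau>) = (if i \<in> \<tau> then c i * face_coeff p (\<tau> - {i}) else 0)"
    proof (cases "i \<in> \<tau>")
      case True
      then have "sqfree_exp \<tau> = single i 1 + sqfree_exp (\<tau> - {i})"
        using assms(1) by (simp add: sqfree_exp_def sum.remove)
      then show ?thesis using True by (simp add: lookup_single_mult_add face_coeff_def)
    next
      case False
      have "sqfree_exp \<tau> \<noteq> single i 1 + q" for q
      proof
        assume "sqfree_exp \<tau> = single i 1 + q"
        then have "lookup (sqfree_exp \<tau>) i = lookup (single i 1 + q) i" by simp
        then show False using False assms(1) by (simp add: lookup_sqfree_exp lookup_add)
      qed
      then show ?thesis using False by (simp add: lookup_single_mult_not_add)
    qed
  qed
  also have "\<dots> = (\<Sum>v\<in>\<tau>. c v * face_coeff p (\<tau> - {v}))"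
    using assms by (simp add: sum.If_cases Int_absorb1)
  finally show ?thesis .
qed

lemma sum_subsets_of_remove:
  fixes \<phi> :: "'a set \<Rightarrow> 'k::comm_ring_1"
  assumes "finite \<tau>" "card \<tau> = i + j"
  shows "(\<Sum>v\<in>\<tau>. \<Sum>\<sigma> | \<sigma> \<subseteq> \<tau> - {v} \<and> card \<sigma> = i. \<phi> \<sigma>)
       = of_nat j * (\<Sum>\<sigma> | \<sigma> \<subseteq> \<tau> \<and> card \<sigma> = i. \<phi> \<sigma>)"
proof -
  let ?S = "{\<sigma>. \<sigma> \<subseteq> \<tau> \<and> card \<sigma> = i}"
  have S: "finite ?S" using assms(1) by (auto intro: finite_subset[of _ "Pow \<tau>"])
  have "(\<Sum>v\<in>\<tau>. \<Sum>\<sigma> | \<sigma> \<subseteq> \<tau> - {v} \<and> card \<sigma> = i. \<phi> \<sigma>) = (\<Sum>v\<in>\<tau>. \<Sum>\<sigma>\<in>?S. if v \<notin> \<sigma> then \<phi> \<sigma> else 0)"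
  proof (rule sum.cong[OF refl])
    fix v
    have "{\<sigma>. \<sigma> \<subseteq> \<tau> - {v} \<and> card \<sigma> = i} = {\<sigma>\<in>?S. v \<notin> \<sigma>}" by auto
    then show "(\<Sum>\<sigma> | \<sigma> \<subseteq> \<tau> - {v} \<and> card \<sigma> = i. \<phi> \<sigma>) = (\<Sum>\<sigma>\<in>?S. if v \<notin> \<sigma> then \<phi> \<sigma> else 0)"
      using sum.inter_filter[OF S, of \<phi> "\<lambda>\<sigma>. v \<notin> \<sigma>"] by (simp only:)
  qed
  also have "\<dots> = (\<Sum>\<sigma>\<in>?S. \<Sum>v\<in>\<tau>. if v \<notin> \<sigma> then \<phi> \<sigma> else 0)"
    by (rule sum.swap)
  also have "\<dots> = (\<Sum>\<sigma>\<in>?S. of_nat j * \<phi> \<sigma>)"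
  proof (rule sum.cong[OF refl])
    fix \<sigma> assume \<sigma>: "\<sigma> \<in> ?S"
    then have "card (\<tau> - \<sigma>) = j"
      using assms card_Diff_subset[of \<sigma> \<tau>] finite_subset[of \<sigma> \<tau>] by simp
    then show "(\<Sum>v\<in>\<tau>. if v \<notin> \<sigma> then \<phi> \<sigma> else 0) = of_nat j * \<phi> \<sigma>"
      using assms(1) by (simp add: sum.If_cases set_diff_eq Collect_neg_eq Int_def)
  qed
  finally show ?thesis by (simp add: sum_distrib_left)
qed

lemma face_coeff_lin_form_power:
  fixes f :: "(nat, 'k::comm_ring_1) mpoly"
  assumes f: "\<And>\<sigma>. finite \<sigma> \<Longrightarrow> \<sigma> \<subseteq> {1..n} \<Longrightarrow>
      face_coeff f \<sigma> = (if card \<sigma> = i then prod c \<sigma> * \<phi> \<sigma> else 0)"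
  shows "finite \<tau> \<Longrightarrow> \<tau> \<subseteq> {1..n} \<Longrightarrow> face_coeff (lin_form n c ^ j * f) \<tau> =
     (if card \<tau> = i + j then of_nat (fact j) * prod c \<tau> * (\<Sum>\<sigma> | \<sigma> \<subseteq> \<tau> \<and> card \<sigma> = i. \<phi> \<sigma>) else 0)"
proof (induction j arbitrary: \<tau>)
  case 0
  then have "{\<sigma>. \<sigma> \<subseteq> \<tau> \<and> card \<sigma> = card \<tau>} = {\<tau>}"
    using card_subset_eq by blast
  then show ?case using 0 f by auto
next
  case (Suc j)
  have "face_coeff (lin_form n c ^ Suc j * f) \<tau> = (\<Sum>v\<in>\<tau>. c v * face_coeff (lin_form n c ^ j * f) (\<tau> - {v}))"
    using face_coeff_lin_form_mult[OF Suc.prems] by (simp add: mult.assoc)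
  also have "\<dots> = (\<Sum>v\<in>\<tau>. if card \<tau> = i + Suc j
      then of_nat (fact j) * prod c \<tau> * (\<Sum>\<sigma> | \<sigma> \<subseteq> \<tau> - {v} \<and> card \<sigma> = i. \<phi> \<sigma>) else 0)"
  proof (rule sum.cong[OF refl])
    fix v assume v: "v \<in> \<tau>"
    have "card \<tau> = Suc (card (\<tau> - {v}))"
      using v Suc.prems(1) by (rule card_Suc_Diff1[symmetric, rotated])
    moreover have "finite (\<tau> - {v})" "\<tau> - {v} \<subseteq> {1..n}" using Suc.prems by auto
    ultimately have "face_coeff (lin_form n c ^ j * f) (\<tau> - {v}) = (if card \<tau> = i + Suc j
        then of_nat (fact j) * prod c (\<tau> - {v}) * (\<Sum>\<sigma> | \<sigma> \<subseteq> \<tau> - {v} \<and> card \<sigma> = i. \<phi> \<sigma>) else 0)"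
      using Suc.IH by simp
    moreover have "prod c \<tau> = c v * prod c (\<tau> - {v})"
      using v Suc.prems(1) by (simp add: prod.remove)
    ultimately show "c v * face_coeff (lin_form n c ^ j * f) (\<tau> - {v}) = (if card \<tau> = i + Suc j
        then of_nat (fact j) * prod c \<tau> * (\<Sum>\<sigma> | \<sigma> \<subseteq> \<tau> - {v} \<and> card \<sigma> = i. \<phi> \<sigma>) else 0)"
      by (simp add: ac_simps)
  qed
  also have "\<dots> = (if card \<tau> = i + Suc j
      then of_nat (fact (Suc j)) * prod c \<tau> * (\<Sum>\<sigma> | \<sigma> \<subseteq> \<tau> \<and> card \<sigma> = i. \<phi> \<sigma>) else 0)"
  proof (cases "card \<tau> = i + Suc j")
    case True
    then show ?thesis using sum_subsets_of_remove[OF Suc.prems(1) True, of \<phi>]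
      by (simp add: sum_distrib_left[symmetric] algebra_simps)
  qed simp
  finally show ?case .
qed

lemma face_coeff_lin_form_power_homog:
  fixes f :: "(nat, 'k::field) mpoly"
  assumes c: "\<forall>v\<in>{1..n}. c v \<noteq> 0" and f: "homog i f" and \<tau>: "finite \<tau>" "\<tau> \<subseteq> {1..n}"
  shows "face_coeff (lin_form n c ^ j * f) \<tau> = (if card \<tau> = i + j then of_nat (fact j) * prod c \<tau> *
     (\<Sum>\<sigma> | \<sigma> \<subseteq> \<tau> \<and> card \<sigma> = i. face_coeff f \<sigma> / prod c \<sigma>) else 0)"
proof (rule face_coeff_lin_form_power[OF _ \<tau>])
  fix \<sigma> :: "nat set" assume "finite \<sigma>" "\<sigma> \<subseteq> {1..n}"
  moreover from this have "prod c \<sigma> \<noteq> 0" using c by (auto simp: prod_zero_iff)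
  ultimately show "face_coeff f \<sigma> = (if card \<sigma> = i then prod c \<sigma> * (face_coeff f \<sigma> / prod c \<sigma>) else 0)"
    using homog_face_coeff[OF f] by auto
qed

lemma sum_card_1_subsets: "(\<Sum>\<sigma> | \<sigma> \<subseteq> \<tau> \<and> card \<sigma> = 1. h \<sigma>) = (\<Sum>v\<in>\<tau>. h {v})"
proof -
  have "{\<sigma>. \<sigma> \<subseteq> \<tau> \<and> card \<sigma> = 1} = (\<lambda>v. {v}) ` \<tau>"
    by (auto simp: card_1_singleton_iff)
  then show ?thesis by (simp add: sum.reindex)
qed

lemma face_coeff_lin_form_singleton:
  assumes "v \<in> {1..n}"
  shows "face_coeff (lin_form n d) {v} = (d v :: 'k::comm_ring_1)"
proof -
  have "single i (1::nat) = single v 1 \<longleftrightarrow> i = v" for i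
    by (metis lookup_single_eq lookup_single_not_eq zero_neq_one)
  then have "face_coeff (lin_form n d) {v} = (\<Sum>i=1..n. if i = v then d i else 0)"
    by (simp add: face_coeff_def lin_form_def sqfree_exp_def lookup_sum Const_def Var_def
        mult_single lookup_single when_def)
  then show ?thesis using assms by simp
qed

context simplicial
begin

lemma lin_form_power_mult_mem_AD_ideal_iff:
  fixes f :: "(nat, 'k::field_char_0) mpoly"
  assumes c: "\<forall>v\<in>{1..n}. c v \<noteq> 0" and f: "f \<in> Sring n" "homog i f"
  shows "lin_form n c ^ j * f \<in> AD_ideal n \<Delta> \<longleftrightarrow>
    (\<forall>\<tau>\<in>\<Delta>. card \<tau> = i + j \<longrightarrow> (\<Sum>\<sigma> | \<sigma> \<subseteq> \<tau> \<and> card \<sigma> = i. face_coeff f \<sigma> / prod c \<sigma>) = 0)"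
proof -
  have "homog (i + j) (lin_form n c ^ j * f)"
    using f(2) by (rule homog_lin_form_power_mult)
  moreover have "prod c \<tau> \<noteq> 0" if "\<tau> \<in> \<Delta>" for \<tau>
    using c face_subset[OF that] finite_face[OF that] by (auto simp: prod_zero_iff)
  ultimately show ?thesis
    using face_coeff_lin_form_power_homog[OF c f(2) finite_face face_subset]
    by (simp add: homog_mem_AD_ideal_iff[OF lin_form_power_mult_in_Sring[OF f(1)]])
qed

end

section \<open>Solvability of linear systems\<close>

text \<open>A matrix is a function \<open>W y x\<close> with rows indexed by \<open>Y\<close> and columns by \<open>X\<close>.\<close>

definition onto_matrix :: "'x set \<Rightarrow> 'y set \<Rightarrow> ('y \<Rightarrow> 'x \<Rightarrow> 'k::field) \<Rightarrow> bool" where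
  "onto_matrix X Y W \<longleftrightarrow> (\<forall>\<psi>. \<exists>\<phi>. \<forall>y\<in>Y. (\<Sum>x\<in>X. W y x * \<phi> x) = \<psi> y)"

definition rows_dependent :: "'x set \<Rightarrow> 'y set \<Rightarrow> ('y \<Rightarrow> 'x \<Rightarrow> 'k::field) \<Rightarrow> bool" where
  "rows_dependent X Y W \<longleftrightarrow> (\<exists>b. (\<exists>y\<in>Y. b y \<noteq> 0) \<and> (\<forall>x\<in>X. (\<Sum>y\<in>Y. b y * W y x) = 0))"

lemma sum_indicator_mult:
  assumes "finite A" "F \<subseteq> A"
  shows "(\<Sum>v\<in>A. (if v \<in> F then 1 else 0) * \<phi> v) = (\<Sum>v\<in>F. \<phi> v :: 'a::comm_semiring_1)"
proof -
  have "(\<Sum>v\<in>A. (if v \<in> F then 1 else 0) * \<phi> v) = (\<Sum>v\<in>A. if v \<in> F then \<phi> v else 0)"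
    by (rule sum.cong) simp_all
  also have "\<dots> = (\<Sum>v\<in>F. \<phi> v)"
    using assms by (simp add: sum.If_cases Int_absorb1)
  finally show ?thesis .
qed

lemma onto_matrix_insert_zero_column:
  assumes "\<forall>y\<in>Y. W y x0 = 0" "x0 \<notin> X" "finite X" "onto_matrix X Y W"
  shows "onto_matrix (insert x0 X) Y W"
  using assms unfolding onto_matrix_def by simp

lemma rows_dependent_insert_zero_column:
  assumes "\<forall>y\<in>Y. W y x0 = 0" "rows_dependent X Y W"
  shows "rows_dependent (insert x0 X) Y W"
  using assms unfolding rows_dependent_def by auto

text \<open>Gaussian elimination with pivot \<open>W y\<^sub>0 x\<^sub>0\<close>.\<close>

lemma onto_matrix_pivot:
  assumes X: "finite X" "x0 \<notin> X" and Y: "finite Y" "y0 \<in> Y" and pivot: "W y0 x0 \<noteq> 0"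
    and onto: "onto_matrix X (Y - {y0}) (\<lambda>y x. W y x - W y x0 / W y0 x0 * W y0 x)"
  shows "onto_matrix (insert x0 X) Y W"
  unfolding onto_matrix_def
proof
  fix \<psi>
  obtain \<phi>' where \<phi>': "\<forall>y\<in>Y - {y0}. (\<Sum>x\<in>X. (W y x - W y x0 / W y0 x0 * W y0 x) * \<phi>' x)
      = \<psi> y - W y x0 / W y0 x0 * \<psi> y0"
    using spec[OF onto[unfolded onto_matrix_def], of "\<lambda>y. \<psi> y - W y x0 / W y0 x0 * \<psi> y0"] by blast
  define S0 where "S0 = (\<Sum>x\<in>X. W y0 x * \<phi>' x)"
  define \<phi> where "\<phi> = \<phi>'(x0 := (\<psi> y0 - S0) / W y0 x0)"
  have expand: "(\<Sum>x\<in>insert x0 X. W y x * \<phi> x) = W y x0 * ((\<psi> y0 - S0) / W y0 x0) + (\<Sum>x\<in>X. W y x * \<phi>' x)" for y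
  proof -
    have "(\<Sum>x\<in>X. W y x * \<phi> x) = (\<Sum>x\<in>X. W y x * \<phi>' x)"
      using X(2) by (intro sum.cong) (auto simp: \<phi>_def)
    then show ?thesis using X by (simp add: \<phi>_def)
  qed
  have "(\<Sum>x\<in>insert x0 X. W y x * \<phi> x) = \<psi> y" if y: "y \<in> Y" for y
  proof (cases "y = y0")
    case True
    then show ?thesis using pivot by (simp add: expand S0_def)
  next
    case False
    have "(\<Sum>x\<in>X. W y x * \<phi>' x)
        = (\<Sum>x\<in>X. (W y x - W y x0 / W y0 x0 * W y0 x) * \<phi>' x) + W y x0 / W y0 x0 * S0"
      by (simp add: S0_def sum_distrib_left algebra_simps sum.distrib[symmetric])
    also have "\<dots> = \<psi> y - W y x0 / W y0 x0 * \<psi> y0 + W y x0 / W y0 x0 * S0"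
      using \<phi>' y False by simp
    finally have "(\<Sum>x\<in>X. W y x * \<phi>' x) = \<psi> y - W y x0 / W y0 x0 * \<psi> y0 + W y x0 / W y0 x0 * S0" .
    then show ?thesis
      unfolding expand using pivot by (simp add: field_simps)
  qed
  then show "\<exists>\<phi>. \<forall>y\<in>Y. (\<Sum>x\<in>insert x0 X. W y x * \<phi> x) = \<psi> y" by blast
qed

lemma rows_dependent_pivot:
  assumes X: "x0 \<notin> X" and Y: "finite Y" "y0 \<in> Y" and pivot: "W y0 x0 \<noteq> 0"
    and dep: "rows_dependent X (Y - {y0}) (\<lambda>y x. W y x - W y x0 / W y0 x0 * W y0 x)"
  shows "rows_dependent (insert x0 X) Y W"
proof -
  obtain b' where b': "\<exists>y\<in>Y - {y0}. b' y \<noteq> 0"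
    "\<forall>x\<in>X. (\<Sum>y\<in>Y - {y0}. b' y * (W y x - W y x0 / W y0 x0 * W y0 x)) = 0"
    using dep unfolding rows_dependent_def by blast
  define T where "T = (\<Sum>y\<in>Y - {y0}. b' y * W y x0)"
  define b where "b = b'(y0 := - T / W y0 x0)"
  have split: "(\<Sum>y\<in>Y. b y * W y x) = - T / W y0 x0 * W y0 x + (\<Sum>y\<in>Y - {y0}. b' y * W y x)" for x
  proof -
    have "(\<Sum>y\<in>Y - {y0}. b y * W y x) = (\<Sum>y\<in>Y - {y0}. b' y * W y x)"
      by (intro sum.cong) (auto simp: b_def)
    then show ?thesis using Y by (simp add: sum.remove b_def)
  qed
  have "(\<Sum>y\<in>Y. b y * W y x) = 0" if "x \<in> insert x0 X" for x
  proof (cases "x = x0")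
    case True
    then show ?thesis using pivot by (simp add: split T_def)
  next
    case False
    have "(\<Sum>y\<in>Y - {y0}. b' y * W y x) = (\<Sum>y\<in>Y - {y0}.
        b' y * (W y x - W y x0 / W y0 x0 * W y0 x) + b' y * W y x0 * (W y0 x / W y0 x0))"
      by (intro sum.cong) (simp_all add: algebra_simps)
    also have "\<dots> = (\<Sum>y\<in>Y - {y0}. b' y * (W y x - W y x0 / W y0 x0 * W y0 x)) + T / W y0 x0 * W y0 x"
      by (simp add: T_def sum.distrib sum_distrib_right sum_divide_distrib)
    also have "\<dots> = T / W y0 x0 * W y0 x"
      using b'(2) that False by simp
    finally show ?thesis unfolding split by simp
  qed
  moreover have "\<exists>y\<in>Y. b y \<noteq> 0" using b'(1) by (auto simp: b_def)
  ultimately show ?thesis unfolding rows_dependent_def by blast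
qed

lemma onto_matrix_or_rows_dependent:
  fixes W :: "'y \<Rightarrow> 'x \<Rightarrow> 'k::field"
  assumes "finite X" "finite Y"
  shows "onto_matrix X Y W \<or> rows_dependent X Y W"
  using assms
proof (induction X arbitrary: Y W rule: finite_induct)
  case empty
  show ?case
  proof (cases "Y = {}")
    case True
    then have "onto_matrix {} Y W" by (simp add: onto_matrix_def)
    then show ?thesis by (rule disjI1)
  next
    case False
    then have "rows_dependent {} Y W"
      unfolding rows_dependent_def by (intro exI[of _ "\<lambda>_. 1"]) auto
    then show ?thesis by (rule disjI2)
  qed
next
  case (insert x0 X)
  show ?case
  proof (cases "\<forall>y\<in>Y. W y x0 = 0")
    case True
    from insert.IH[OF insert.prems, of W] show ?thesis
    proof
      assume "onto_matrix X Y W"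
      with True insert.hyps show ?thesis by (simp add: onto_matrix_insert_zero_column)
    next
      assume "rows_dependent X Y W"
      with True show ?thesis by (simp add: rows_dependent_insert_zero_column)
    qed
  next
    case False
    then obtain y0 where y0: "y0 \<in> Y" "W y0 x0 \<noteq> 0" by blast
    let ?W = "\<lambda>y x. W y x - W y x0 / W y0 x0 * W y0 x"
    have "finite (Y - {y0})" using insert.prems by simp
    from insert.IH[OF this, of ?W] show ?thesis
    proof
      assume "onto_matrix X (Y - {y0}) ?W"
      with insert.hyps insert.prems y0 show ?thesis by (simp add: onto_matrix_pivot)
    next
      assume "rows_dependent X (Y - {y0}) ?W"
      with insert.hyps insert.prems y0 show ?thesis by (simp add: rows_dependent_pivot)
    qed
  qed
qed

lemma onto_matrix_of_rat:
  fixes W :: "'y \<Rightarrow> 'x \<Rightarrow> rat"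
  assumes "finite Y" "onto_matrix X Y W"
  shows "onto_matrix X Y (\<lambda>y x. of_rat (W y x) :: 'k::field_char_0)"
  unfolding onto_matrix_def
proof
  fix \<psi> :: "'y \<Rightarrow> 'k"
  have "\<exists>\<phi>. \<forall>y\<in>Y. (\<Sum>x\<in>X. W y x * \<phi> x) = (if y = y' then 1 else 0)" for y'
    using spec[OF assms(2)[unfolded onto_matrix_def], of "\<lambda>y. if y = y' then 1 else 0"] by simp
  then obtain \<Phi> where \<Phi>: "\<And>y' y. y \<in> Y \<Longrightarrow> (\<Sum>x\<in>X. W y x * \<Phi> y' x) = (if y = y' then 1 else 0)"
    by (metis choice)
  define \<phi> where "\<phi> x = (\<Sum>y'\<in>Y. \<psi> y' * of_rat (\<Phi> y' x))" for x
  have "(\<Sum>x\<in>X. of_rat (W y x) * \<phi> x) = \<psi> y" if "y \<in> Y" for y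
  proof -
    have "(\<Sum>x\<in>X. of_rat (W y x) * \<phi> x) = (\<Sum>y'\<in>Y. \<psi> y' * of_rat (\<Sum>x\<in>X. W y x * \<Phi> y' x))"
      unfolding \<phi>_def of_rat_sum of_rat_mult sum_distrib_left
      by (subst sum.swap) (simp add: algebra_simps)
    also have "\<dots> = (\<Sum>y'\<in>Y. if y = y' then \<psi> y' else 0)"
      using that \<Phi> by (intro sum.cong) auto
    also have "\<dots> = \<psi> y" using that assms(1) by simp
    finally show ?thesis .
  qed
  then show "\<exists>\<phi>. \<forall>y\<in>Y. (\<Sum>x\<in>X. of_rat (W y x) * \<phi> x) = \<psi> y" by blast
qed

lemma rat_common_denominator:
  fixes q :: "'y \<Rightarrow> rat"
  assumes "finite Y"
  obtains D :: int and a where "D > 0" "\<forall>y\<in>Y. q y * of_int D = of_int (a y)"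
proof -
  have "\<exists>D :: int. D > 0 \<and> (\<forall>y\<in>Y. q y * of_int D \<in> \<int>)"
    using assms
  proof (induction Y rule: finite_induct)
    case (insert y0 Y)
    then obtain D where D: "D > 0" "\<forall>y\<in>Y. q y * of_int D \<in> \<int>" by blast
    obtain m d where md: "quotient_of (q y0) = (m, d)" by (cases "quotient_of (q y0)")
    have "d > 0" using quotient_of_denom_pos[OF md] .
    have "q y0 * of_int (D * d) = of_int (m * D)"
      using quotient_of_div[OF md] \<open>d > 0\<close> by (simp add: field_simps)
    then have "q y0 * of_int (D * d) \<in> \<int>" by (metis Ints_of_int)
    moreover have "q y * of_int (D * d) \<in> \<int>" if "y \<in> Y" for y
      using D(2) that Ints_mult[OF _ Ints_of_int, of "q y * of_int D" d] by (simp add: ac_simps)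
    ultimately show ?case using D(1) \<open>d > 0\<close> by (intro exI[of _ "D * d"]) simp
  qed (rule exI[of _ 1], simp)
  then obtain D :: int where D: "D > 0" "\<forall>y\<in>Y. \<exists>i. q y * of_int D = of_int i"
    by (metis Ints_cases)
  from D(2) have "\<exists>a. \<forall>y\<in>Y. q y * of_int D = of_int (a y)" by (rule bchoice)
  with D(1) that show thesis by blast
qed

section \<open>The Rees algebra of the facet ideal\<close>

definition monomial_subst :: "('v \<Rightarrow> ('w \<Rightarrow>\<^sub>0 nat)) \<Rightarrow> ('v \<Rightarrow>\<^sub>0 nat) \<Rightarrow> ('w \<Rightarrow>\<^sub>0 nat)" where
  "monomial_subst \<psi> m = (\<Sum>v\<in>keys m. \<Sum>_<lookup m v. \<psi> v)"

lemma lookup_monomial_subst: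
  assumes "finite S" "keys m \<subseteq> S"
  shows "lookup (monomial_subst \<psi> m) x = (\<Sum>v\<in>S. lookup m v * lookup (\<psi> v) x)"
proof -
  have "lookup (monomial_subst \<psi> m) x = (\<Sum>v\<in>keys m. lookup m v * lookup (\<psi> v) x)"
    by (simp add: monomial_subst_def lookup_sum)
  also have "\<dots> = (\<Sum>v\<in>S. lookup m v * lookup (\<psi> v) x)"
    using assms by (intro sum.mono_neutral_left) (auto simp: in_keys_iff)
  finally show ?thesis .
qed

lemma peval_single_monomials:
  "peval Const (\<lambda>v. single (\<psi> v) 1) p = (\<Sum>m\<in>keys p. single (monomial_subst \<psi> m) (lookup p m))"
proof -
  have power: "single e (1::'k::comm_ring_1) ^ k = single (\<Sum>_<k. e) 1" for e k
    by (induction k) (simp_all add: mult_single add.commute)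
  have prod: "(\<Prod>v\<in>S. single (e v) (1::'k::comm_ring_1)) = single (\<Sum>v\<in>S. e v) 1" for S e
    by (induction S rule: infinite_finite_induct) (simp_all add: mult_single)
  show ?thesis
    unfolding peval_def monomial_subst_def power prod
    by (simp add: Const_def mult_single)
qed

lemma monomial_subst_single: "monomial_subst \<psi> (single v 1) = \<psi> v"
  by (simp add: monomial_subst_def)

text \<open>Exponents of the images \<open>x\<^sub>i\<close> and \<open>x\<^sub>F t\<close> of the variables \<open>x\<^sub>i\<close> and \<open>w\<^sub>F\<close>.\<close>

definition rees_exp :: "nat + nat set \<Rightarrow> (nat option \<Rightarrow>\<^sub>0 nat)" where
  "rees_exp v = (case v of Inl i \<Rightarrow> single (Some i) 1 | Inr F \<Rightarrow> sqfree_exp (Some ` F) + single None 1)"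

lemma rees_map_eq_sum:
  "rees_map \<Delta> p = (\<Sum>m\<in>keys p. single (monomial_subst rees_exp m) (lookup p m))"
proof -
  have eq: "(\<lambda>v. case v of Inl i \<Rightarrow> Var (Some i) | Inr F \<Rightarrow> sqfree_mon (Some ` F) * Var None)
      = (\<lambda>v. single (rees_exp v) 1 :: (nat option, 'k::comm_ring_1) mpoly)"
  proof
    fix v show "(case v of Inl i \<Rightarrow> Var (Some i) | Inr F \<Rightarrow> sqfree_mon (Some ` F) * Var None)
      = (single (rees_exp v) 1 :: (nat option, 'k) mpoly)"
      by (cases v) (simp_all add: rees_exp_def Var_def sqfree_mon_eq_single mult_single)
  qed
  show ?thesis
    unfolding rees_map_def eq by (rule peval_single_monomials)
qed

lemma lookup_rees_exp:
  "lookup (rees_exp (Inl i)) (Some j) = (if i = j then 1 else 0)"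
  "lookup (rees_exp (Inl i)) None = 0"
  "finite F \<Longrightarrow> lookup (rees_exp (Inr F)) (Some j) = (if j \<in> F then 1 else 0)"
  "finite F \<Longrightarrow> lookup (rees_exp (Inr F)) None = 1"
  by (auto simp: rees_exp_def lookup_add lookup_single lookup_sqfree_exp)

lemma wdeg_eq_1:
  assumes "wdeg m = 1"
  obtains F where "lookup m (Inr F) = 1" "\<And>G. G \<noteq> F \<Longrightarrow> lookup m (Inr G) = 0"
proof -
  let ?f = "\<lambda>v. case v of Inl _ \<Rightarrow> 0 | Inr _ \<Rightarrow> lookup m v"
  have "sum ?f (keys m) = 1" using assms unfolding wdeg_def .
  then obtain v where v: "v \<in> keys m" "?f v = 1" and others: "\<And>u. u \<in> keys m \<Longrightarrow> v \<noteq> u \<Longrightarrow> ?f u = 0"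
    unfolding sum_eq_1_iff[OF finite_keys] by blast
  obtain F where F: "v = Inr F" using v(2) by (cases v) auto
  show thesis
  proof (rule that)
    show "lookup m (Inr F) = 1" using v(2) F by simp
    show "lookup m (Inr G) = 0" if "G \<noteq> F" for G
    proof (cases "Inr G \<in> keys m")
      case True
      then show ?thesis using others[OF True] F that by simp
    qed (simp add: in_keys_iff)
  qed
qed

lemma lookup_monomial_subst_rees_exp_Some:
  assumes "finite F" and "\<And>G. G \<noteq> F \<Longrightarrow> lookup m (Inr G) = 0"
  shows "lookup (monomial_subst rees_exp m) (Some j)
    = lookup m (Inl j) + lookup m (Inr F) * (if j \<in> F then 1 else 0)"
proof -
  have "lookup (monomial_subst rees_exp m) (Some j)
      = (\<Sum>v\<in>keys m \<union> {Inl j, Inr F}. lookup m v * lookup (rees_exp v) (Some j))"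
    by (rule lookup_monomial_subst) auto
  also have "\<dots> = (\<Sum>v\<in>{Inl j, Inr F}. lookup m v * lookup (rees_exp v) (Some j))"
  proof (intro sum.mono_neutral_right ballI)
    fix v assume "v \<in> keys m \<union> {Inl j, Inr F} - {Inl j, Inr F}"
    then show "lookup m v * lookup (rees_exp v) (Some j) = 0"
      using assms(2) by (cases v) (auto simp: lookup_rees_exp(1))
  qed auto
  finally show ?thesis using assms(1) by (simp add: lookup_rees_exp)
qed

context simplicial
begin

lemma monomial_subst_eq_facet:
  assumes m: "keys m \<subseteq> Inl ` {1..n} \<union> Inr ` facets \<Delta>" "wdeg m = 1"
    and F0: "F0 \<in> facets \<Delta>" and eq: "monomial_subst rees_exp m = rees_exp (Inr F0)"
  shows "m = single (Inr F0) 1"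
proof -
  obtain F where F: "lookup m (Inr F) = 1" "\<And>G. G \<noteq> F \<Longrightarrow> lookup m (Inr G) = 0"
    using wdeg_eq_1[OF m(2)] by blast
  have "Inr F \<in> keys m" using F(1) by (simp add: in_keys_iff)
  then have F_facet: "F \<in> facets \<Delta>" using m(1) by auto
  have finite: "finite F" "finite F0" using F_facet F0 finite_face facet_face by auto
  have at_Some: "lookup m (Inl j) + (if j \<in> F then 1 else 0) = (if j \<in> F0 then 1 else 0)" for j
    using lookup_monomial_subst_rees_exp_Some[OF finite(1) F(2)] eq finite(2) F(1)
    by (simp add: lookup_rees_exp)
  have "F \<subseteq> F0"
  proof
    fix j assume "j \<in> F"
    with at_Some[of j] show "j \<in> F0" by (simp split: if_splits)
  qed
  then have "F = F0" using F_facet facet_face[OF F0] unfolding facets_def by blast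
  then have "\<And>j. lookup m (Inl j) = 0" using at_Some by simp
  show ?thesis
  proof (rule poly_mapping_eqI)
    fix v show "lookup m v = lookup (single (Inr F0) 1) v"
    proof (cases v)
      case (Inl j)
      then show ?thesis using \<open>\<And>j. lookup m (Inl j) = 0\<close> by (simp add: lookup_single)
    next
      case (Inr G)
      then show ?thesis using F \<open>F = F0\<close> by (cases "G = F0") (simp_all add: lookup_single)
    qed
  qed
qed

text \<open>\<open>w\<^sub>F\<close> is the only monomial linear in the \<open>w\<close>'s that maps to \<open>x\<^sub>F t\<close>,
  so it cannot cancel in a relation.\<close>

lemma linear_rees_relation_monomials:
  fixes g :: "(nat + nat set, 'k::comm_ring_1) mpoly"
  assumes g: "g \<in> rees_ideal n \<Delta>" "linear_in_w g" and m0: "m0 \<in> keys g"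
  shows "\<exists>i. Inl i \<in> keys m0"
proof (rule ccontr)
  assume no_x: "\<nexists>i. Inl i \<in> keys m0"
  have keys_g: "keys m \<subseteq> Inl ` {1..n} \<union> Inr ` facets \<Delta>" "wdeg m = 1" if "m \<in> keys g" for m
    using g that unfolding rees_ideal_def Sw_ring_def poly_in_def linear_in_w_def by auto
  obtain F0 where F0: "lookup m0 (Inr F0) = 1" "\<And>G. G \<noteq> F0 \<Longrightarrow> lookup m0 (Inr G) = 0"
    using wdeg_eq_1 keys_g(2)[OF m0] by blast
  then have "Inr F0 \<in> keys m0" by (simp add: in_keys_iff)
  then have "F0 \<in> facets \<Delta>" using keys_g(1)[OF m0] by auto
  have "m0 = single (Inr F0) 1"
  proof (rule poly_mapping_eqI)
    fix v show "lookup m0 v = lookup (single (Inr F0) 1) v"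
    proof (cases v)
      case (Inl j)
      then show ?thesis using no_x by (simp add: lookup_single in_keys_iff)
    next
      case (Inr G)
      then show ?thesis using F0 by (cases "G = F0") (simp_all add: lookup_single)
    qed
  qed
  have m0_subst: "monomial_subst rees_exp m0 = rees_exp (Inr F0)"
    unfolding \<open>m0 = single (Inr F0) 1\<close> by (rule monomial_subst_single)
  have unique: "m = m0" if "m \<in> keys g" "monomial_subst rees_exp m = rees_exp (Inr F0)" for m
    using monomial_subst_eq_facet[OF keys_g[OF that(1)] \<open>F0 \<in> facets \<Delta>\<close> that(2)]
      \<open>m0 = single (Inr F0) 1\<close> by simp
  have "lookup (rees_map \<Delta> g) (rees_exp (Inr F0)) = (\<Sum>m\<in>keys g. if m = m0 then lookup g m else 0)"
    unfolding rees_map_eq_sum lookup_sum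
  proof (rule sum.cong[OF refl])
    fix m assume "m \<in> keys g"
    then show "lookup (single (monomial_subst rees_exp m) (lookup g m)) (rees_exp (Inr F0))
        = (if m = m0 then lookup g m else 0)"
      using unique[of m] m0_subst by (cases "m = m0") (auto simp: lookup_single when_def)
  qed
  also have "\<dots> = lookup g m0" using m0 by simp
  finally have "lookup (rees_map \<Delta> g) (rees_exp (Inr F0)) = lookup g m0" .
  then show False using g(1) m0 by (simp add: rees_ideal_def in_keys_iff)
qed

lemma linear_type_monomials:
  fixes x :: "(nat + nat set, 'k::comm_ring_1) mpoly"
  assumes "x \<in> ideal_gen_in R {p \<in> rees_ideal n \<Delta>. linear_in_w p}" and "m \<in> keys x"
  shows "\<exists>i. Inl i \<in> keys m"
proof -
  obtain g :: "(nat + nat set, 'k) mpoly" and r m'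
    where "g \<in> {p \<in> rees_ideal n \<Delta>. linear_in_w p}" "m' \<in> keys g" "m = r + m'"
    using ideal_gen_in_keys[OF assms] by blast
  moreover from this obtain i where "Inl i \<in> keys m'"
    using linear_rees_relation_monomials by blast
  ultimately show ?thesis by (auto simp: keys_add_nat)
qed

end

lemma sum_nat_eq_sum_nat_uminus:
  assumes "(\<Sum>x\<in>A. g x) = (0::int)"
  shows "(\<Sum>x\<in>A. nat (g x)) = (\<Sum>x\<in>A. nat (- g x))"
proof -
  have "int (\<Sum>x\<in>A. nat (g x)) - int (\<Sum>x\<in>A. nat (- g x)) = (\<Sum>x\<in>A. int (nat (g x)) - int (nat (- g x)))"
    by (simp only: of_nat_sum sum_subtractf)
  also have "\<dots> = (\<Sum>x\<in>A. g x)"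
    by (rule sum.cong) auto
  finally show ?thesis using assms by linarith
qed

definition facet_exp :: "nat set set \<Rightarrow> (nat set \<Rightarrow> nat) \<Rightarrow> (nat + nat set \<Rightarrow>\<^sub>0 nat)" where
  "facet_exp \<Delta> e = (\<Sum>F\<in>facets \<Delta>. single (Inr F) (e F))"

context simplicial
begin

lemma lookup_facet_exp:
  "lookup (facet_exp \<Delta> e) v = (case v of Inl _ \<Rightarrow> 0 | Inr F \<Rightarrow> if F \<in> facets \<Delta> then e F else 0)"
  using finite_facets by (cases v) (auto simp: facet_exp_def lookup_sum lookup_single when_def)

lemma keys_facet_exp: "keys (facet_exp \<Delta> e) \<subseteq> Inr ` facets \<Delta>"
proof
  fix v assume "v \<in> keys (facet_exp \<Delta> e)"
  then show "v \<in> Inr ` facets \<Delta>"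
    by (cases v) (auto simp: in_keys_iff lookup_facet_exp split: if_splits)
qed

lemma lookup_monomial_subst_facet_exp:
  "lookup (monomial_subst rees_exp (facet_exp \<Delta> e)) (Some j) = (\<Sum>F\<in>facets \<Delta>. if j \<in> F then e F else 0)"
  "lookup (monomial_subst rees_exp (facet_exp \<Delta> e)) None = (\<Sum>F\<in>facets \<Delta>. e F)"
proof -
  have "lookup (monomial_subst rees_exp (facet_exp \<Delta> e)) x
      = (\<Sum>F\<in>facets \<Delta>. e F * lookup (rees_exp (Inr F)) x)" for x
    using lookup_monomial_subst[OF _ keys_facet_exp] finite_facets
    by (simp add: sum.reindex lookup_facet_exp)
  then show "lookup (monomial_subst rees_exp (facet_exp \<Delta> e)) (Some j) = (\<Sum>F\<in>facets \<Delta>. if j \<in> F then e F else 0)"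
    "lookup (monomial_subst rees_exp (facet_exp \<Delta> e)) None = (\<Sum>F\<in>facets \<Delta>. e F)"
    using finite_face facet_face by (auto simp: lookup_rees_exp intro: sum.cong)
qed

lemma binomial_mem_rees_ideal:
  assumes keys: "keys M \<subseteq> Inr ` facets \<Delta>" "keys M' \<subseteq> Inr ` facets \<Delta>"
    and eq: "monomial_subst rees_exp M = monomial_subst rees_exp M'"
  shows "(single M 1 - single M' 1 :: (nat + nat set, 'k::comm_ring_1) mpoly) \<in> rees_ideal n \<Delta>"
proof (cases "M = M'")
  case False
  let ?B = "single M 1 - single M' 1 :: (nat + nat set, 'k) mpoly"
  have keys_B: "keys ?B = {M, M'}" and coeffs: "lookup ?B M = 1" "lookup ?B M' = -1"
    using False by (auto simp: in_keys_iff lookup_minus lookup_single when_def split: if_splits)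
  have "rees_map \<Delta> ?B = single (monomial_subst rees_exp M) 1 + single (monomial_subst rees_exp M) (-1)"
    unfolding rees_map_eq_sum keys_B using False coeffs eq by simp
  also have "\<dots> = 0" by (simp flip: single_add)
  finally show ?thesis
    using keys by (auto simp: rees_ideal_def Sw_ring_def poly_in_def keys_B)
qed (simp add: rees_ideal_def Sw_ring_def rees_map_eq_sum)

text \<open>A nonzero integer weighting \<open>a\<close> of the facets that is balanced at every vertex would give
  the binomial \<open>\<Prod> w\<^sub>F\<^bsup>a\<^sub>F\<^sup>+\<^esup> - \<Prod> w\<^sub>F\<^bsup>a\<^sub>F\<^sup>-\<^esup>\<close> in the Rees ideal, which has no \<open>x\<^sub>i\<close> at all.\<close>

lemma balanced_facet_weights_zero:
  assumes linear_type: "facet_ideal_linear_type TYPE('k::comm_ring_1) n \<Delta>"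
    and balanced: "\<And>j. (\<Sum>F\<in>facets \<Delta>. if j \<in> F then a F else 0) = (0::int)"
    and total: "(\<Sum>F\<in>facets \<Delta>. a F) = 0" and F0: "F0 \<in> facets \<Delta>"
  shows "a F0 = 0"
proof (rule ccontr)
  assume "a F0 \<noteq> 0"
  define M M' where "M = facet_exp \<Delta> (\<lambda>F. nat (a F))" and "M' = facet_exp \<Delta> (\<lambda>F. nat (- a F))"
  have "nat (a F0) \<noteq> nat (- a F0)" using \<open>a F0 \<noteq> 0\<close> by (cases "a F0 > 0") auto
  then have "lookup M (Inr F0) \<noteq> lookup M' (Inr F0)"
    using F0 by (simp add: M_def M'_def lookup_facet_exp)
  then have "M \<noteq> M'" by auto
  have "monomial_subst rees_exp M = monomial_subst rees_exp M'"
  proof (rule poly_mapping_eqI)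
    fix x show "lookup (monomial_subst rees_exp M) x = lookup (monomial_subst rees_exp M') x"
    proof (cases x)
      case None
      then show ?thesis
        using sum_nat_eq_sum_nat_uminus[OF total] by (simp add: M_def M'_def lookup_monomial_subst_facet_exp)
    next
      case (Some j)
      have "(\<Sum>F\<in>facets \<Delta>. nat (if j \<in> F then a F else 0)) = (\<Sum>F\<in>facets \<Delta>. nat (- (if j \<in> F then a F else 0)))"
        by (rule sum_nat_eq_sum_nat_uminus[OF balanced])
      then show ?thesis
        using Some by (simp add: M_def M'_def lookup_monomial_subst_facet_exp if_distrib[of nat] if_distrib[of uminus] cong: if_cong)
    qed
  qed
  then have "(single M 1 - single M' 1 :: (nat + nat set, 'k) mpoly) \<in> rees_ideal n \<Delta>"
    by (intro binomial_mem_rees_ideal) (simp_all add: M_def M'_def keys_facet_exp)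
  then have "(single M 1 - single M' 1 :: (nat + nat set, 'k) mpoly)
      \<in> ideal_gen_in (Sw_ring n \<Delta>) {p \<in> rees_ideal n \<Delta>. linear_in_w p}"
    using linear_type unfolding facet_ideal_linear_type_def by simp
  moreover have "M \<in> keys (single M 1 - single M' 1 :: (nat + nat set, 'k) mpoly)"
    using \<open>M \<noteq> M'\<close> by (simp add: in_keys_iff lookup_minus lookup_single)
  ultimately obtain i where "Inl i \<in> keys M" using linear_type_monomials by blast
  then show False using keys_facet_exp by (auto simp: M_def)
qed

end

context pure_2_complex
begin

lemma facet_incidence_rows_independent:
  assumes linear_type: "facet_ideal_linear_type TYPE('k::comm_ring_1) n \<Delta>"
  shows "\<not> rows_dependent {1..n} (facets \<Delta>) (\<lambda>F v. if v \<in> F then 1 else 0 :: rat)"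
proof
  assume "rows_dependent {1..n} (facets \<Delta>) (\<lambda>F v. if v \<in> F then 1 else 0 :: rat)"
  then obtain b :: "nat set \<Rightarrow> rat" and F0 where F0: "F0 \<in> facets \<Delta>" "b F0 \<noteq> 0"
    and b: "\<And>v. v \<in> {1..n} \<Longrightarrow> (\<Sum>F\<in>facets \<Delta>. b F * (if v \<in> F then 1 else 0)) = 0"
    unfolding rows_dependent_def by blast
  obtain D :: int and a where D: "D > 0" "\<forall>F\<in>facets \<Delta>. b F * of_int D = of_int (a F)"
    using rat_common_denominator[OF finite_facets] by blast
  have balanced: "(\<Sum>F\<in>facets \<Delta>. if j \<in> F then a F else 0) = 0" for j
  proof (cases "j \<in> {1..n}")
    case True
    have "of_int (\<Sum>F\<in>facets \<Delta>. if j \<in> F then a F else 0)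
        = (\<Sum>F\<in>facets \<Delta>. b F * (if j \<in> F then 1 else 0)) * (of_int D :: rat)"
      unfolding sum_distrib_right of_int_sum using D(2) by (intro sum.cong) auto
    also have "\<dots> = 0" using b[OF True] by simp
    finally show ?thesis by (simp only: of_int_eq_0_iff)
  next
    case False
    then have "j \<notin> F" if "F \<in> facets \<Delta>" for F using face_subset[OF facet_face[OF that]] by blast
    then show ?thesis by (intro sum.neutral) auto
  qed
  have "3 * (\<Sum>F\<in>facets \<Delta>. a F) = (\<Sum>F\<in>facets \<Delta>. \<Sum>j\<in>{1..n}. if j \<in> F then a F else 0)"
    unfolding sum_distrib_left
    using card_facet face_subset facet_face by (intro sum.cong) (simp_all add: sum.If_cases Int_absorb1)
  also have "\<dots> = 0" by (subst sum.swap) (simp add: balanced)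
  finally have "a F0 = 0"
    using balanced_facet_weights_zero[OF linear_type balanced _ F0(1)] by simp
  then have "b F0 * of_int D = 0" using D(2) F0(1) by simp
  then show False using D(1) F0(2) by simp
qed

lemma facet_incidence_onto:
  assumes "facet_ideal_linear_type TYPE('k::field_char_0) n \<Delta>"
  shows "onto_matrix {1..n} (facets \<Delta>) (\<lambda>F v. if v \<in> F then 1 else 0 :: 'k)"
proof -
  have "onto_matrix {1..n} (facets \<Delta>) (\<lambda>F v. if v \<in> F then 1 else 0 :: rat)"
    using onto_matrix_or_rows_dependent facet_incidence_rows_independent[OF assms] finite_facets
    by blast
  from onto_matrix_of_rat[OF finite_facets this] show ?thesis
    by (simp add: if_distrib[of of_rat] cong: if_cong)
qed

end

section \<open>The strong Lefschetz property\<close>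

lemma mult_full_rank_power_0:
  "mult_full_rank n (AD_ideal n \<Delta> :: (nat, 'k::comm_ring_1) mpoly set) L i 0"
proof -
  have "g - L ^ 0 * g \<in> AD_ideal n \<Delta>" for g :: "(nat, 'k) mpoly"
    by (simp add: AD_ideal_def ideal_gen_in_0)
  then show ?thesis unfolding mult_full_rank_def by auto
qed

context pure_2_complex
begin

lemma mult_full_rank_beyond_top:
  assumes "3 < i + j"
  shows "mult_full_rank n (AD_ideal n \<Delta> :: (nat, 'k::comm_ring_1) mpoly set) L i j"
proof -
  have "g - L ^ j * 0 \<in> AD_ideal n \<Delta>" if "g \<in> Sring n" "homog (i + j) g" for g :: "(nat, 'k) mpoly"
    using homog_mem_AD_ideal_iff[OF that] card_face_le_3 assms by fastforce
  then show ?thesis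
    unfolding mult_full_rank_def by (auto intro!: exI[of _ 0] simp: Sring_def homog_def)
qed

lemma mult_full_rank_from_degree_0:
  assumes c: "\<forall>v\<in>{1..n}. c v \<noteq> 0" and "j \<le> 3"
  shows "mult_full_rank n (AD_ideal n \<Delta> :: (nat, 'k::field_char_0) mpoly set) (lin_form n c) 0 j"
  unfolding mult_full_rank_def
proof (rule disjI1, intro allI impI)
  fix f :: "(nat, 'k) mpoly"
  assume f: "f \<in> Sring n \<and> homog 0 f \<and> lin_form n c ^ j * f \<in> AD_ideal n \<Delta>"
  obtain \<tau> where \<tau>: "\<tau> \<in> \<Delta>" "card \<tau> = j" using exists_face_card[OF \<open>j \<le> 3\<close>] .
  have "{\<sigma>. \<sigma> \<subseteq> \<tau> \<and> card \<sigma> = 0} = {{}}"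
    using finite_face[OF \<tau>(1)] by (force simp: card_eq_0_iff dest: finite_subset)
  then have "face_coeff f {} = 0"
    using f lin_form_power_mult_mem_AD_ideal_iff[OF c, of f 0 j] \<tau> by auto
  then show "f \<in> AD_ideal n \<Delta>"
    using f homog_mem_AD_ideal_iff[of f 0] finite_face by auto
qed

text \<open>Every vertex \<open>v\<close> lies in a triangle \<open>{v, u, w}\<close>; if \<open>L f \<in> I\<close> then the rescaled
  coefficients \<open>\<phi>\<close> of \<open>f\<close> satisfy \<open>\<phi> x + \<phi> y = 0\<close> on each of its edges, forcing \<open>\<phi> v = 0\<close>.\<close>

lemma mult_full_rank_1_1:
  assumes c: "\<forall>v\<in>{1..n}. c v \<noteq> 0"
  shows "mult_full_rank n (AD_ideal n \<Delta> :: (nat, 'k::field_char_0) mpoly set) (lin_form n c) 1 1"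
  unfolding mult_full_rank_def
proof (rule disjI1, intro allI impI)
  fix f :: "(nat, 'k) mpoly"
  assume f: "f \<in> Sring n \<and> homog 1 f \<and> lin_form n c ^ 1 * f \<in> AD_ideal n \<Delta>"
  define \<phi> where "\<phi> v = face_coeff f {v} / c v" for v
  have edge: "\<phi> x + \<phi> y = 0" if "{x, y} \<in> \<Delta>" "x \<noteq> y" for x y
  proof -
    have "(\<Sum>\<sigma> | \<sigma> \<subseteq> {x, y} \<and> card \<sigma> = 1. face_coeff f \<sigma> / prod c \<sigma>) = 0"
      using f lin_form_power_mult_mem_AD_ideal_iff[OF c, of f 1 1] that by auto
    then show ?thesis by (simp only: sum_card_1_subsets) (simp add: \<phi>_def that)
  qed
  have "face_coeff f {v} = 0" if v: "{v} \<in> \<Delta>" for v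
  proof -
    obtain F where F: "F \<in> facets \<Delta>" "v \<in> F" using face_subset_facet[OF v] by blast
    then obtain u w where uw: "F = {v, u, w}" "u \<noteq> v" "w \<noteq> v" "u \<noteq> w"
      using card_facet[OF F(1)] by (auto simp: card_3_iff)
    then have "\<phi> v + \<phi> u = 0" "\<phi> v + \<phi> w = 0" "\<phi> u + \<phi> w = 0"
      using edge subface[OF facet_face[OF F(1)]] by (metis empty_subsetI insert_commute insert_mono)+
    moreover have "2 * \<phi> v = (\<phi> v + \<phi> u) + (\<phi> v + \<phi> w) - (\<phi> u + \<phi> w)"
      by (simp add: algebra_simps)
    ultimately have "\<phi> v = 0" by simp
    then show ?thesis using c face_subset[OF v] by (simp add: \<phi>_def)
  qed
  then show "f \<in> AD_ideal n \<Delta>"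
    using f homog_mem_AD_ideal_iff[of f 1] by (auto simp: card_1_singleton_iff)
qed

text \<open>The coefficients of \<open>L\<^sup>2 f\<close> on the facets are the facet sums of the rescaled
  coefficients of \<open>f\<close>, which by linear type can be prescribed arbitrarily.\<close>

lemma lin_form_power_2_onto:
  fixes g :: "(nat, 'k::field_char_0) mpoly"
  assumes linear_type: "facet_ideal_linear_type TYPE('k) n \<Delta>"
    and c: "\<forall>v\<in>{1..n}. c v \<noteq> 0" and g: "g \<in> Sring n" "homog 3 g"
  obtains f :: "(nat, 'k) mpoly"
    where "f \<in> Sring n" "homog 1 f" "g - lin_form n c ^ 2 * f \<in> AD_ideal n \<Delta>"
proof -
  obtain \<phi> where \<phi>: "\<forall>F\<in>facets \<Delta>.
      (\<Sum>v\<in>{1..n}. (if v \<in> F then 1 else 0) * \<phi> v) = face_coeff g F / (2 * prod c F)"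
    using spec[OF facet_incidence_onto[OF linear_type, unfolded onto_matrix_def],
        of "\<lambda>F. face_coeff g F / (2 * prod c F)"] by blast
  define f where "f = lin_form n (\<lambda>v. c v * \<phi> v)"
  have f: "f \<in> Sring n" "homog 1 f" unfolding f_def by (rule lin_form_in_Sring homog_lin_form)+
  have L2f: "lin_form n c ^ 2 * f \<in> Sring n" "homog 3 (lin_form n c ^ 2 * f)"
    using lin_form_power_mult_in_Sring[OF f(1)] homog_lin_form_power_mult[OF f(2), of 2 n c]
    by (simp_all add: numeral_3_eq_3)
  have "face_coeff (lin_form n c ^ 2 * f) \<tau> = face_coeff g \<tau>" if "\<tau> \<in> \<Delta>" "card \<tau> = 3" for \<tau>
  proof -
    have facet: "\<tau> \<in> facets \<Delta>" "\<tau> \<subseteq> {1..n}" "finite \<tau>"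
      using that face_subset_facet card_facet face_subset finite_face
      by (metis card_subset_eq facet_face finite_face)+
    have "prod c \<tau> \<noteq> 0" using c facet by (auto simp: prod_zero_iff)
    have "face_coeff (lin_form n c ^ 2 * f) \<tau>
        = 2 * prod c \<tau> * (\<Sum>\<sigma> | \<sigma> \<subseteq> \<tau> \<and> card \<sigma> = 1. face_coeff f \<sigma> / prod c \<sigma>)"
      using face_coeff_lin_form_power_homog[OF c f(2) facet(3,2), of 2] that(2) by simp
    also have "\<dots> = 2 * prod c \<tau> * (\<Sum>v\<in>\<tau>. \<phi> v)"
      unfolding sum_card_1_subsets using facet c by (simp add: f_def face_coeff_lin_form_singleton subset_iff)
    also have "(\<Sum>v\<in>\<tau>. \<phi> v) = face_coeff g \<tau> / (2 * prod c \<tau>)"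
      using \<phi> facet(1) sum_indicator_mult[OF finite_atLeastAtMost facet(2)] by metis
    finally show ?thesis using \<open>prod c \<tau> \<noteq> 0\<close> by simp
  qed
  then have "g - lin_form n c ^ 2 * f \<in> AD_ideal n \<Delta>"
    using homog_mem_AD_ideal_iff[of "g - lin_form n c ^ 2 * f" 3] g L2f
    by (simp add: face_coeff_diff homog_diff Sring_def poly_in_diff)
  with f show thesis by (rule that)
qed

lemma mult_full_rank_1_2:
  assumes "facet_ideal_linear_type TYPE('k::field_char_0) n \<Delta>" and "\<forall>v\<in>{1..n}. c v \<noteq> 0"
  shows "mult_full_rank n (AD_ideal n \<Delta> :: (nat, 'k) mpoly set) (lin_form n c) 1 2"
  unfolding mult_full_rank_def
  using lin_form_power_2_onto[OF assms] by (intro disjI2) (metis one_plus_numeral semiring_norm(3))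

lemma mult_full_rank_2_1:
  assumes "facet_ideal_linear_type TYPE('k::field_char_0) n \<Delta>" and "\<forall>v\<in>{1..n}. c v \<noteq> 0"
  shows "mult_full_rank n (AD_ideal n \<Delta> :: (nat, 'k) mpoly set) (lin_form n c) 2 1"
  unfolding mult_full_rank_def
proof (rule disjI2, intro allI impI)
  fix g :: "(nat, 'k) mpoly" assume "g \<in> Sring n \<and> homog (2 + 1) g"
  then obtain f where f: "f \<in> Sring n" "homog 1 f" "g - lin_form n c ^ 2 * f \<in> AD_ideal n \<Delta>"
    using lin_form_power_2_onto[OF assms] by auto
  then have "lin_form n c * f \<in> Sring n" "homog 2 (lin_form n c * f)"
    using lin_form_power_mult_in_Sring[OF f(1), of c 1] homog_lin_form_power_mult[OF f(2), of 1 n c]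
    by (simp_all add: numeral_2_eq_2)
  moreover have "g - lin_form n c ^ 1 * (lin_form n c * f) \<in> AD_ideal n \<Delta>"
    using f(3) by (simp add: power2_eq_square mult.assoc)
  ultimately show "\<exists>f. f \<in> Sring n \<and> homog 2 f \<and> g - lin_form n c ^ 1 * f \<in> AD_ideal n \<Delta>" by blast
qed

lemma mult_full_rank_lin_form:
  assumes "facet_ideal_linear_type TYPE('k::field_char_0) n \<Delta>" and c: "\<forall>v\<in>{1..n}. c v \<noteq> 0"
  shows "mult_full_rank n (AD_ideal n \<Delta> :: (nat, 'k) mpoly set) (lin_form n c) i j"
proof -
  consider "j = 0" | "3 < i + j" | "i = 0" "j \<le> 3" | "i = 1" "j = 1" | "i = 1" "j = 2" | "i = 2" "j = 1"
    by linarith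
  then show ?thesis
  proof cases
    case 1
    then show ?thesis by (simp add: mult_full_rank_power_0)
  next
    case 2
    then show ?thesis by (rule mult_full_rank_beyond_top)
  next
    case 3
    then show ?thesis using mult_full_rank_from_degree_0[OF c] by simp
  next
    case 4
    then show ?thesis using mult_full_rank_1_1[OF c] by simp
  next
    case 5
    then show ?thesis using mult_full_rank_1_2[OF assms] by simp
  next
    case 6
    then show ?thesis using mult_full_rank_2_1[OF assms] by simp
  qed
qed

end

theorem corollary4p2:
  fixes n :: nat and \<Delta> :: "nat set set"
  assumes "simplicial_complex n \<Delta>"
    and "pure_of_dim 2 \<Delta>"
    and "facet_ideal_linear_type TYPE('k::field_char_0) n \<Delta>"
  shows "strong_lefschetz n (AD_ideal n \<Delta> :: (nat, 'k) mpoly set)"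
proof -
  interpret pure_2_complex n \<Delta>
    using assms(1,2) by unfold_locales
  show ?thesis
    unfolding strong_lefschetz_def
  proof (intro exI[of _ "sqfree_mon {1..n}"] conjI allI impI)
    fix c :: "nat \<Rightarrow> 'k" and i j
    assume "peval (\<lambda>a. a) c (sqfree_mon {1..n}) \<noteq> 0"
    then have "\<forall>v\<in>{1..n}. c v \<noteq> 0" by (simp add: peval_sqfree_mon prod_zero_iff)
    then show "mult_full_rank n (AD_ideal n \<Delta>) (lin_form n c) i j"
      by (rule mult_full_rank_lin_form[OF assms(3)])
  qed (simp_all add: sqfree_mon_in_Sring sqfree_mon_neq_0)
qed

end
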